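(* Let $\gamma,\lambda\in(0,1)$, $0\le a<b<\infty$ and $H>1$. Let $g:\mathbb R^d\to\mathbb R$ be a bounded, nonnegative, continuous function with $g(x)\le H$ and $|g(x)-g(y)|\le H|x-y|^\gamma$ for all $x,y\in\mathbb R^d$. Then for every $R>1$ and every $r$ with $$0<r<\frac Rb\wedge\Big[\frac1{b-a}\Big(2^{-\frac{\gamma+1}{\gamma}}H^{-\frac d\gamma}R^{d-1}\frac{d\pi^{d/2}}{\Gamma(d/2+1)}\Big)^{\frac1{\gamma+d-1}}\Big],$$ we have $$\Big(\int_{R+ar<|x|<R+br}g(x)\,dx\Big)^{\frac{\gamma\lambda+d}{\gamma+d}}\le N\,R^{\frac{d(d-1)}{\gamma+d}}\big(r(b-a)\big)^{-\frac{d(\gamma+d-1)}{\gamma+d}}\int_{R+ar<|x|<R+br}g(x)^\lambda\,dx,$$ where $N=N(\gamma,\lambda,d,H)$.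
   Context: $\Gamma$ denotes the Gamma function; all integrals are with respect to Lebesgue measure on $\mathbb R^d$. *)

theory Defs
  imports "HOL-Analysis.Analysis"
begin

end

theory Submission
  imports Defs
begin

text \<open>
  Write the shell as an annulus of width L = r (b - a) and let m be the supremum of g on it.
  The pointwise bound g \<le> m powr (1 - lam) * g powr lam bounds the integral I of g by
  m powr (1 - lam) times the integral J of g powr lam. Conversely, by Hoelder continuity
  g \<ge> m/4 on the ball of radius rho = (m / (4 H)) powr (1 / gam) around a point where g > m/2,
  and the annulus contains a ball of radius min rho L / 4 inside that ball, so J is at least
  Jl = (m/4) powr lam * unit_ball_vol d * (min rho L / 4) powr d. Interpolating with p = (gam lam + d) / (gam + d) gives
  I powr p \<le> m powr ((1 - lam) p) * Jl powr (p - 1) * J. If rho \<le> L the powers of m cancel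
  exactly, and the restriction on r is what bounds the remaining constant by a multiple of
  R powr (d (d - 1) / (gam + d)) * L powr (- d (gam + d - 1) / (gam + d)); if rho > L then
  L < 1, and m \<le> H suffices.
\<close>

definition annulus :: "real \<Rightarrow> real \<Rightarrow> 'a::real_normed_vector set" where
  "annulus s t = {x. s < norm x \<and> norm x < t}"

lemma open_annulus: "open (annulus s t)"
  unfolding annulus_def by (intro open_Collect_conj open_Collect_less continuous_intros)

lemma bounded_annulus: "bounded (annulus s t)"
  by (rule bounded_subset[OF bounded_cball[of 0 t]]) (auto simp: annulus_def)

lemma annulus_in_sets_lborel: "annulus s t \<in> sets lborel"
  by (simp add: borel_open open_annulus)

lemma ball_subset_annulus_inter_ball:
  fixes x0 :: "'a::real_normed_vector"
  assumes "0 \<le> s" "x0 \<in> annulus s t" "0 < \<delta>" "2 * \<delta> \<le> t - s" "2 * \<delta> \<le> \<rho>"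
  shows "\<exists>y. ball y \<delta> \<subseteq> annulus s t \<inter> ball x0 \<rho>"
proof -
  define n where "n = norm x0"
  \<comment> \<open>Move x0 radially until its distance to both boundary spheres is at least \<delta>.\<close>
  define c where "c = min (max n (s + \<delta>)) (t - \<delta>)"
  define y where "y = (c / n) *\<^sub>R x0"
  have n: "s < n" "n < t" using assms(2) by (auto simp: annulus_def n_def)
  have c: "s + \<delta> \<le> c" "c \<le> t - \<delta>" "\<bar>c - n\<bar> \<le> \<delta>"
    using assms n by (auto simp: c_def)
  have "0 < n" "0 < c" using assms n c by linarith+
  then have norm_y: "norm y = c" by (simp add: y_def n_def)
  have "y - x0 = (c / n - 1) *\<^sub>R x0" by (simp add: y_def algebra_simps)
  then have "norm (y - x0) = \<bar>c / n - 1\<bar> * n" by (simp add: n_def)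
  also have "\<dots> = \<bar>c - n\<bar>"
    using \<open>0 < n\<close> by (simp add: abs_div diff_divide_distrib[symmetric] field_simps)
  finally have "norm (y - x0) = \<bar>c - n\<bar>" .
  show ?thesis
  proof (intro exI subsetI)
    fix z assume "z \<in> ball y \<delta>"
    then have "norm (z - y) < \<delta>" by (simp add: dist_norm norm_minus_commute)
    moreover have "norm z \<le> norm y + norm (z - y)" "norm y \<le> norm z + norm (z - y)"
      using norm_triangle_ineq[of y "z - y"] norm_triangle_ineq[of z "y - z"]
      by (auto simp: norm_minus_commute)
    moreover have "norm (z - x0) \<le> norm (z - y) + norm (y - x0)"
      using norm_triangle_ineq[of "z - y" "y - x0"] by simp
    ultimately show "z \<in> annulus s t \<inter> ball x0 \<rho>"
      using \<open>norm (y - x0) = \<bar>c - n\<bar>\<close> norm_y c assms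
      by (auto simp: annulus_def dist_norm norm_minus_commute)
  qed
qed

lemma set_integrable_continuous_bounded:
  fixes f :: "'a::euclidean_space \<Rightarrow> 'b::{banach, second_countable_topology}"
  assumes "continuous_on UNIV f" "bounded A" "A \<in> sets lborel"
  shows "set_integrable lborel A f"
proof -
  obtain c R where "A \<subseteq> cball c R" using assms(2) by (auto simp: bounded_subset_cball)
  moreover have "set_integrable lborel (cball c R) f"
    unfolding set_integrable_def
    by (rule borel_integrable_compact) (auto intro: continuous_on_subset[OF assms(1)])
  ultimately show ?thesis using set_integrable_subset assms(3) by metis
qed

lemma le_powr_mult_powr_of_le:
  fixes x m lam :: real
  assumes "0 \<le> x" "x \<le> m" "lam \<le> 1"
  shows "x \<le> m powr (1 - lam) * x powr lam"
proof (cases "x = 0")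
  case False
  then have "x = x powr (1 - lam) * x powr lam" using assms by (simp flip: powr_add)
  also have "\<dots> \<le> m powr (1 - lam) * x powr lam"
    using assms by (intro mult_right_mono powr_mono2) auto
  finally show ?thesis .
qed simp

lemma set_integral_le_bound_powr_mult:
  fixes f :: "'a \<Rightarrow> real"
  assumes "set_integrable M A f" "set_integrable M A (\<lambda>x. f x powr lam)"
    and "\<And>x. x \<in> A \<Longrightarrow> 0 \<le> f x" "\<And>x. x \<in> A \<Longrightarrow> f x \<le> m" "lam \<le> 1"
  shows "(LINT x:A|M. f x) \<le> m powr (1 - lam) * (LINT x:A|M. f x powr lam)"
proof -
  have "(LINT x:A|M. f x) \<le> (LINT x:A|M. m powr (1 - lam) * f x powr lam)"
    using assms by (intro set_integral_mono le_powr_mult_powr_of_le) auto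
  then show ?thesis by simp
qed

lemma const_mult_measure_le_set_integral:
  fixes f :: "'a \<Rightarrow> real"
  assumes "set_integrable M A f" "B \<in> sets M" "B \<subseteq> A" "emeasure M B < \<infinity>"
    and "\<And>x. x \<in> A \<Longrightarrow> 0 \<le> f x" "\<And>x. x \<in> B \<Longrightarrow> c \<le> f x" "0 \<le> c"
  shows "c * measure M B \<le> (LINT x:A|M. f x)"
proof -
  have restrict: "indicator A x *\<^sub>R (c * indicator B x) = c * indicator B x" for x :: 'a
    using assms(3) by (auto simp: indicator_def)
  have "c * measure M B = (LINT x:A|M. c * indicator B x)"
    unfolding set_lebesgue_integral_def restrict using assms(2) by simp
  also have "\<dots> \<le> (LINT x:A|M. f x)"
  proof (rule set_integral_mono[OF _ assms(1)])
    show "set_integrable M A (\<lambda>x. c * indicator B x)"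
      unfolding set_integrable_def restrict using assms(2,4) by simp
  qed (use assms in \<open>auto simp: indicator_def\<close>)
  finally show ?thesis .
qed

lemma holder_ge_on_ball:
  fixes g :: "'a::real_normed_vector \<Rightarrow> real"
  assumes "\<forall>x y. \<bar>g x - g y\<bar> \<le> H * norm (x - y) powr gam" "0 < gam" "0 < H" "0 < c"
    and "x \<in> ball x0 ((c / H) powr (1 / gam))"
  shows "g x0 - c \<le> g x"
proof -
  have "norm (x0 - x) powr gam \<le> ((c / H) powr (1 / gam)) powr gam"
    using assms(2,5) by (intro powr_mono2) (auto simp: dist_norm)
  also have "\<dots> = c / H" using assms by (simp add: powr_powr)
  finally have "H * norm (x0 - x) powr gam \<le> c" using assms(3) by (simp add: field_simps)
  then show ?thesis using abs_le_D1[OF assms(1)[rule_format, of x0 x]] by linarith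
qed

lemma annulus_set_integral_powr_ge:
  fixes g :: "'a::euclidean_space \<Rightarrow> real"
  assumes "\<forall>x y. \<bar>g x - g y\<bar> \<le> H * norm (x - y) powr gam"
    and "0 < gam" "0 < H" "0 < lam" "continuous_on UNIV g" "\<forall>x. 0 \<le> g x"
    and "0 \<le> s" "0 < L" "x0 \<in> annulus s (s + L)" "0 < m" "m < 2 * g x0"
  shows "(m / 4) powr lam * unit_ball_vol (real DIM('a))
      * (min ((m / (4 * H)) powr (1 / gam)) L / 4) powr real DIM('a)
    \<le> (LINT x:annulus s (s + L)|lborel. g x powr lam)"
proof -
  define \<rho> where "\<rho> = (m / (4 * H)) powr (1 / gam)"
  define \<delta> where "\<delta> = min \<rho> L / 4"
  have "0 < \<rho>" "0 < \<delta>" using assms by (simp_all add: \<rho>_def \<delta>_def)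
  have "2 * \<delta> \<le> s + L - s" "2 * \<delta> \<le> \<rho>"
    using \<open>0 < \<rho>\<close> \<open>0 < L\<close> by (auto simp: \<delta>_def)
  then obtain y where y: "ball y \<delta> \<subseteq> annulus s (s + L) \<inter> ball x0 \<rho>"
    using ball_subset_annulus_inter_ball assms(7,9) \<open>0 < \<delta>\<close> by blast
  have "(m / 4) powr lam \<le> g x powr lam" if "x \<in> ball y \<delta>" for x
  proof -
    have "x \<in> ball x0 ((m / 4 / H) powr (1 / gam))"
      using that y by (auto simp: \<rho>_def)
    then have "g x0 - m / 4 \<le> g x"
      using assms by (intro holder_ge_on_ball[of g H gam]) auto
    then show ?thesis using assms by (intro powr_mono2) auto
  qed
  moreover have "continuous_on UNIV (\<lambda>x. g x powr lam)"
    using assms by (intro continuous_on_powr') auto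
  then have "set_integrable lborel (annulus s (s + L)) (\<lambda>x. g x powr lam)"
    using annulus_in_sets_lborel bounded_annulus by (intro set_integrable_continuous_bounded)
  ultimately have "(m / 4) powr lam * measure lborel (ball y \<delta>)
      \<le> (LINT x:annulus s (s + L)|lborel. g x powr lam)"
    using y by (intro const_mult_measure_le_set_integral[OF _ _ _ emeasure_lborel_ball_finite]) auto
  then show ?thesis
    using \<open>0 < \<delta>\<close> by (simp add: content_ball powr_realpow \<rho>_def \<delta>_def mult.assoc)
qed

lemma annulus_integral_sup_bounds:
  fixes g :: "'a::euclidean_space \<Rightarrow> real"
  assumes "0 < gam" "0 < lam" "lam < 1" "continuous_on UNIV g" "\<forall>x. 0 \<le> g x \<and> g x \<le> H"
    and "\<forall>x y. \<bar>g x - g y\<bar> \<le> H * norm (x - y) powr gam"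
    and "0 \<le> s" "0 < L" "0 < (LINT x:annulus s (s + L)|lborel. g x)"
  obtains m where "0 < m" "m \<le> H"
    and "(LINT x:annulus s (s + L)|lborel. g x)
      \<le> m powr (1 - lam) * (LINT x:annulus s (s + L)|lborel. g x powr lam)"
    and "(m / 4) powr lam * unit_ball_vol (real DIM('a))
        * (min ((m / (4 * H)) powr (1 / gam)) L / 4) powr real DIM('a)
      \<le> (LINT x:annulus s (s + L)|lborel. g x powr lam)"
proof -
  define A where "A = (annulus s (s + L) :: 'a set)"
  have integrable: "set_integrable lborel A g" "set_integrable lborel A (\<lambda>x. g x powr lam)"
    using assms annulus_in_sets_lborel bounded_annulus
    by (auto simp: A_def intro!: set_integrable_continuous_bounded continuous_on_powr')
  have "A \<noteq> {}" using assms(9) by (auto simp: A_def set_lebesgue_integral_def)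
  define m where "m = (SUP x\<in>A. g x)"
  have "bdd_above (g ` A)" using assms by (auto intro: bdd_aboveI[of _ H])
  then have g_le_m: "g x \<le> m" if "x \<in> A" for x
    using that by (simp add: m_def cSUP_upper)
  have "m \<le> H" using \<open>A \<noteq> {}\<close> assms by (auto simp: m_def intro: cSUP_least)
  have I_le: "(LINT x:A|lborel. g x) \<le> m powr (1 - lam) * (LINT x:A|lborel. g x powr lam)"
    using integrable assms g_le_m by (intro set_integral_le_bound_powr_mult) auto
  have "0 < m"
  proof -
    from \<open>A \<noteq> {}\<close> obtain x where "x \<in> A" by blast
    then have "0 \<le> m" using g_le_m assms by (meson order_trans)
    moreover have "m \<noteq> 0" using I_le assms(9) by (auto simp: A_def)
    ultimately show ?thesis by simp
  qed
  obtain x0 where "x0 \<in> A" "m / 2 < g x0"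
    using less_cSUP_iff[OF \<open>A \<noteq> {}\<close> \<open>bdd_above (g ` A)\<close>, of "m / 2"] \<open>0 < m\<close>
    by (auto simp: m_def)
  then have "(m / 4) powr lam * unit_ball_vol (real DIM('a))
        * (min ((m / (4 * H)) powr (1 / gam)) L / 4) powr real DIM('a)
      \<le> (LINT x:A|lborel. g x powr lam)"
    unfolding A_def using assms \<open>0 < m\<close> \<open>m \<le> H\<close>
    by (intro annulus_set_integral_powr_ge) (auto simp: A_def)
  then show ?thesis using that \<open>0 < m\<close> \<open>m \<le> H\<close> I_le by (simp add: A_def)
qed

lemma powr_le_mult_powr_of_lower_bound:
  fixes I J Jl K p :: real
  assumes "0 \<le> I" "I \<le> K * J" "0 < Jl" "Jl \<le> J" "0 < p" "p \<le> 1"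
  shows "I powr p \<le> K powr p * Jl powr (p - 1) * J"
proof (cases "I = 0")
  case False
  have "0 < J" using assms by linarith
  moreover have "0 < K * J" using assms False by linarith
  ultimately have "0 < K" by (simp add: zero_less_mult_iff)
  have "I powr p \<le> (K * J) powr p"
    using assms by (intro powr_mono2) auto
  also have "\<dots> = K powr p * J powr (p - 1) * J"
    using \<open>0 < J\<close> \<open>0 < K\<close> powr_add[of J "p - 1" 1] by (simp add: powr_mult)
  also have "\<dots> \<le> K powr p * Jl powr (p - 1) * J"
    using assms \<open>0 < J\<close> by (intro mult_left_mono mult_right_mono powr_mono2') auto
  finally show ?thesis .
qed (use assms in simp)

lemma one_le_powr_mult_powr_of_less_root:
  fixes K L e q :: real
  assumes "0 < K" "0 < L" "0 < e" "0 \<le> q" "L < K powr (1 / e)"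
  shows "1 \<le> K powr q * L powr (- e * q)"
proof -
  have "L powr e < (K powr (1 / e)) powr e"
    using assms by (intro powr_less_mono2) auto
  then have "L powr e < K" using assms by (simp add: powr_powr)
  then have "K powr (- q) \<le> (L powr e) powr (- q)"
    using assms by (intro powr_mono2') auto
  then have "K powr q * K powr (- q) \<le> K powr q * L powr (- e * q)"
    using assms by (intro mult_left_mono) (auto simp: powr_powr)
  then show ?thesis using assms by (simp flip: powr_add)
qed

text \<open>The factor d * unit_ball_vol d is the area of the unit sphere,
  d pi powr (d/2) / Gamma (d/2 + 1), appearing in the restriction on r.\<close>

definition annulus_width_const :: "real \<Rightarrow> real \<Rightarrow> real \<Rightarrow> real" where
  "annulus_width_const gam H d = 2 powr (- (gam + 1) / gam) * H powr (- d / gam) * (d * unit_ball_vol d)"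

lemma annulus_width_const_pos: "0 < H \<Longrightarrow> 0 < d \<Longrightarrow> 0 < annulus_width_const gam H d"
  by (simp add: annulus_width_const_def)

text \<open>The two summands cover the cases rho \<le> L and L < rho of the proof.\<close>

definition annulus_const :: "real \<Rightarrow> real \<Rightarrow> real \<Rightarrow> real \<Rightarrow> real" where
  "annulus_const gam lam H d =
    (let p = (gam * lam + d) / (gam + d); w = unit_ball_vol d in
      (w / (4 powr (lam + d) * (4 * H) powr (d / gam))) powr (p - 1)
        * annulus_width_const gam H d powr (d / (gam + d))
      + 4 powr ((lam + d) * (1 - p)) * w powr (p - 1) * H powr (p - lam))"

lemma annulus_const_nonneg: "0 \<le> annulus_const gam lam H d"
  by (simp add: annulus_const_def Let_def)

lemma small_radius_factor_eq:
  fixes gam lam H d m :: real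
  assumes "0 < gam" "0 \<le> d" "0 < H" "0 < m"
  defines "p \<equiv> (gam * lam + d) / (gam + d)"
  shows "m powr ((1 - lam) * p)
      * ((m / 4) powr lam * unit_ball_vol d * ((m / (4 * H)) powr (1 / gam) / 4) powr d) powr (p - 1)
    = (unit_ball_vol d / (4 powr (lam + d) * (4 * H) powr (d / gam))) powr (p - 1)"
proof -
  define c where "c = unit_ball_vol d / (4 powr (lam + d) * (4 * H) powr (d / gam))"
  have "0 < c" using assms by (simp add: c_def)
  have "((m / (4 * H)) powr (1 / gam) / 4) powr d = m powr (d / gam) / ((4 * H) powr (d / gam) * 4 powr d)"
    using assms by (simp add: powr_divide powr_powr powr_mult)
  then have inner: "(m / 4) powr lam * unit_ball_vol d * ((m / (4 * H)) powr (1 / gam) / 4) powr d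
      = c * m powr (lam + d / gam)"
    by (simp add: c_def powr_divide powr_add field_simps)
  have "gam + d \<noteq> 0" "gam \<noteq> 0" using assms by linarith+
  then have "(lam + d / gam) * (p - 1) = - ((1 - lam) * p)"
    unfolding p_def by (simp add: divide_simps) (simp add: algebra_simps)
  then have "m powr ((1 - lam) * p) * (m powr (lam + d / gam)) powr (p - 1) = 1"
    using \<open>0 < m\<close> by (simp add: powr_powr flip: powr_add)
  then show ?thesis
    unfolding inner c_def[symmetric] using \<open>0 < c\<close> \<open>0 < m\<close> by (simp add: powr_mult ac_simps)
qed

lemma large_radius_factor_le:
  fixes gam lam H d m L :: real
  assumes "0 < gam" "0 \<le> lam" "lam \<le> 1" "1 \<le> d" "0 < m" "m \<le> H" "0 < L" "L \<le> 1"
  defines "p \<equiv> (gam * lam + d) / (gam + d)"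
  shows "m powr ((1 - lam) * p) * ((m / 4) powr lam * unit_ball_vol d * (L / 4) powr d) powr (p - 1)
    \<le> 4 powr ((lam + d) * (1 - p)) * unit_ball_vol d powr (p - 1) * H powr (p - lam)
      * L powr (- (d * (gam + d - 1) / (gam + d)))"
proof -
  define q where "q = 4 powr (- (lam + d)) * unit_ball_vol d"
  have "(m / 4) powr lam * unit_ball_vol d * (L / 4) powr d
      = m powr lam / 4 powr lam * unit_ball_vol d * (L powr d / 4 powr d)"
    using assms by (simp add: powr_divide)
  also have "\<dots> = q * m powr lam * L powr d"
    unfolding q_def by (simp only: powr_minus powr_add) (simp add: field_simps)
  finally have inner: "(m / 4) powr lam * unit_ball_vol d * (L / 4) powr d = q * m powr lam * L powr d" .
  have "0 < q" using assms(4) by (simp add: q_def)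
  then have "m powr ((1 - lam) * p) * ((m / 4) powr lam * unit_ball_vol d * (L / 4) powr d) powr (p - 1)
      = q powr (p - 1) * (m powr ((1 - lam) * p) * m powr (lam * (p - 1))) * L powr (d * (p - 1))"
    unfolding inner using assms(5,7) by (simp add: powr_mult powr_powr ac_simps)
  also have "m powr ((1 - lam) * p) * m powr (lam * (p - 1)) = m powr (p - lam)"
    by (simp add: algebra_simps flip: powr_add)
  also have "q powr (p - 1) = 4 powr ((lam + d) * (1 - p)) * unit_ball_vol d powr (p - 1)"
    using assms(4) by (simp add: q_def powr_mult powr_powr algebra_simps)
  finally have eq: "m powr ((1 - lam) * p)
      * ((m / 4) powr lam * unit_ball_vol d * (L / 4) powr d) powr (p - 1)
    = 4 powr ((lam + d) * (1 - p)) * unit_ball_vol d powr (p - 1) * m powr (p - lam)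
      * L powr (d * (p - 1))" .
  have "m powr (p - lam) \<le> H powr (p - lam)"
    using assms(1-6) by (intro powr_mono2) (auto simp: p_def field_simps)
  moreover have "L powr (d * (p - 1)) \<le> L powr (- (d * (gam + d - 1) / (gam + d)))"
  proof (rule powr_mono')
    have "gam * (1 - lam) \<le> gam + d - 1"
      using assms(4) mult_nonneg_nonneg[OF less_imp_le[OF assms(1)] assms(2)]
      by (simp add: algebra_simps)
    then have "d * (gam * (1 - lam)) / (gam + d) \<le> d * (gam + d - 1) / (gam + d)"
      using assms(1,4) by (intro divide_right_mono mult_left_mono) auto
    moreover have "d * (p - 1) = - (d * (gam * (1 - lam)) / (gam + d))"
      using assms(1,4) unfolding p_def by (simp add: divide_simps) (simp add: algebra_simps)
    ultimately show "- (d * (gam + d - 1) / (gam + d)) \<le> d * (p - 1)" by linarith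
  qed (use assms(7,8) in auto)
  ultimately show ?thesis
    unfolding eq by (intro mult_mono mult_left_mono) auto
qed

lemma one_le_annulus_width_bound:
  fixes gam H d L R :: real
  assumes "0 < gam" "0 < H" "1 \<le> d" "0 < L" "1 \<le> R"
    and "L < (annulus_width_const gam H d * R powr (d - 1)) powr (1 / (gam + d - 1))"
  shows "1 \<le> annulus_width_const gam H d powr (d / (gam + d))
    * (R powr (d * (d - 1) / (gam + d)) * L powr (- (d * (gam + d - 1) / (gam + d))))"
proof -
  have "0 < annulus_width_const gam H d" using assms by (intro annulus_width_const_pos) auto
  then have "1 \<le> (annulus_width_const gam H d * R powr (d - 1)) powr (d / (gam + d))
      * L powr (- (gam + d - 1) * (d / (gam + d)))"
    using assms by (intro one_le_powr_mult_powr_of_less_root) auto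
  moreover have "- (gam + d - 1) * (d / (gam + d)) = - (d * (gam + d - 1) / (gam + d))"
    by (simp add: divide_simps) (simp add: algebra_simps)
  ultimately show ?thesis
    using \<open>0 < annulus_width_const gam H d\<close> assms(5) by (simp add: powr_mult powr_powr ac_simps)
qed

lemma annulus_factor_le:
  fixes gam lam H d m L R :: real
  assumes "0 < gam" "0 \<le> lam" "lam \<le> 1" "1 \<le> d" "0 < m" "m \<le> H" "0 < L" "1 \<le> R"
    and "L < (annulus_width_const gam H d * R powr (d - 1)) powr (1 / (gam + d - 1))"
  defines "p \<equiv> (gam * lam + d) / (gam + d)"
    and "\<rho> \<equiv> (m / (4 * H)) powr (1 / gam)"
  shows "m powr ((1 - lam) * p)
      * ((m / 4) powr lam * unit_ball_vol d * (min \<rho> L / 4) powr d) powr (p - 1)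
    \<le> annulus_const gam lam H d * R powr (d * (d - 1) / (gam + d))
      * L powr (- (d * (gam + d - 1) / (gam + d)))"
proof -
  define c where "c = annulus_width_const gam H d powr (d / (gam + d))"
  define X where "X = R powr (d * (d - 1) / (gam + d)) * L powr (- (d * (gam + d - 1) / (gam + d)))"
  define N1 where "N1 = (unit_ball_vol d / (4 powr (lam + d) * (4 * H) powr (d / gam))) powr (p - 1)"
  define N2 where "N2 = 4 powr ((lam + d) * (1 - p)) * unit_ball_vol d powr (p - 1) * H powr (p - lam)"
  have const: "annulus_const gam lam H d = N1 * c + N2"
    by (simp add: annulus_const_def Let_def N1_def N2_def c_def p_def)
  have "1 \<le> c * X"
    unfolding c_def X_def using assms by (intro one_le_annulus_width_bound) auto
  have "0 \<le> N1" "0 \<le> N2" "0 \<le> X" by (simp_all add: N1_def N2_def X_def)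
  have "m powr ((1 - lam) * p)
      * ((m / 4) powr lam * unit_ball_vol d * (min \<rho> L / 4) powr d) powr (p - 1)
    \<le> (N1 * c + N2) * X"
  proof (cases "\<rho> \<le> L")
    case True
    then have "m powr ((1 - lam) * p)
        * ((m / 4) powr lam * unit_ball_vol d * (min \<rho> L / 4) powr d) powr (p - 1) = N1"
      using assms small_radius_factor_eq[of gam d H m lam] by (simp add: N1_def p_def \<rho>_def)
    also have "\<dots> \<le> N1 * (c * X)"
      using \<open>1 \<le> c * X\<close> \<open>0 \<le> N1\<close> mult_left_mono[of 1 "c * X" N1] by simp
    also have "\<dots> \<le> (N1 * c + N2) * X"
      using \<open>0 \<le> N2\<close> \<open>0 \<le> X\<close> by (simp add: algebra_simps)
    finally show ?thesis .
  next
    case False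
    have "\<rho> < 1"
      using assms by (simp add: \<rho>_def powr01_less_one)
    then have "m powr ((1 - lam) * p)
        * ((m / 4) powr lam * unit_ball_vol d * (min \<rho> L / 4) powr d) powr (p - 1)
      \<le> N2 * L powr (- (d * (gam + d - 1) / (gam + d)))"
      using assms False large_radius_factor_le[of gam lam d m H L] by (simp add: N2_def p_def)
    also have "\<dots> \<le> N2 * X"
    proof -
      have "1 \<le> R powr (d * (d - 1) / (gam + d))"
        using assms(1,4,8) by (intro ge_one_powr_ge_zero) auto
      then show ?thesis
        unfolding X_def using \<open>0 \<le> N2\<close>
        by (intro mult_left_mono) (simp_all add: mult_le_cancel_right1)
    qed
    also have "\<dots> \<le> (N1 * c + N2) * X"
      using \<open>0 \<le> N1\<close> \<open>0 \<le> X\<close> by (simp add: algebra_simps c_def)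
    finally show ?thesis .
  qed
  then show ?thesis by (simp add: const X_def mult.assoc)
qed

lemma annulus_integral_estimate:
  fixes g :: "'a::euclidean_space \<Rightarrow> real" and gam lam H s L R :: real
  defines "d \<equiv> real DIM('a)"
  assumes "0 < gam" "0 < lam" "lam < 1" "continuous_on UNIV g" "\<forall>x. 0 \<le> g x \<and> g x \<le> H"
    and "\<forall>x y. \<bar>g x - g y\<bar> \<le> H * norm (x - y) powr gam"
    and "0 \<le> s" "0 < L" "1 \<le> R"
    and "L < (annulus_width_const gam H d * R powr (d - 1)) powr (1 / (gam + d - 1))"
  shows "(LINT x:annulus s (s + L)|lborel. g x) powr ((gam * lam + d) / (gam + d))
    \<le> annulus_const gam lam H d * R powr (d * (d - 1) / (gam + d))
      * L powr (- (d * (gam + d - 1) / (gam + d)))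
      * (LINT x:annulus s (s + L)|lborel. g x powr lam)"
proof -
  define I where "I = (LINT x:annulus s (s + L)|lborel. g x)"
  define J where "J = (LINT x:annulus s (s + L)|lborel. g x powr lam)"
  define p where "p = (gam * lam + d) / (gam + d)"
  have "1 \<le> d" using DIM_positive[where 'a='a] by (simp add: d_def)
  have "0 \<le> I" "0 \<le> J"
    using assms by (auto simp: I_def J_def set_lebesgue_integral_def indicator_def
        intro!: Bochner_Integration.integral_nonneg)
  show ?thesis
  proof (cases "I = 0")
    case True
    then show ?thesis
      using \<open>0 \<le> J\<close> annulus_const_nonneg assms by (simp add: I_def J_def d_def)
  next
    case False
    with \<open>0 \<le> I\<close> obtain m where "0 < m" "m \<le> H" and I_le: "I \<le> m powr (1 - lam) * J"
      and Jl_le: "(m / 4) powr lam * unit_ball_vol d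
        * (min ((m / (4 * H)) powr (1 / gam)) L / 4) powr d \<le> J"
      using annulus_integral_sup_bounds[OF assms(2-9)] unfolding I_def J_def d_def by auto
    define \<delta> where "\<delta> = min ((m / (4 * H)) powr (1 / gam)) L / 4"
    define Jl where "Jl = (m / 4) powr lam * unit_ball_vol d * \<delta> powr d"
    have "0 < \<delta>" using \<open>0 < m\<close> \<open>m \<le> H\<close> \<open>0 < L\<close> by (simp add: \<delta>_def)
    then have "0 < Jl" using \<open>0 < m\<close> \<open>1 \<le> d\<close> by (simp add: Jl_def)
    have "0 < gam * lam" using assms(2,3) by simp
    then have "0 < p" "p \<le> 1"
      using \<open>1 \<le> d\<close> assms(2,4) unfolding p_def
      by (simp_all add: divide_le_eq_1 zero_less_divide_iff)
    have "I powr p \<le> (m powr (1 - lam)) powr p * Jl powr (p - 1) * J"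
      using \<open>0 \<le> I\<close> I_le \<open>0 < Jl\<close> Jl_le \<open>0 < p\<close> \<open>p \<le> 1\<close> unfolding Jl_def \<delta>_def
      by (rule powr_le_mult_powr_of_lower_bound)
    also have "\<dots> = m powr ((1 - lam) * p) * Jl powr (p - 1) * J"
      by (simp add: powr_powr)
    also have "\<dots> \<le> annulus_const gam lam H d * R powr (d * (d - 1) / (gam + d))
        * L powr (- (d * (gam + d - 1) / (gam + d))) * J"
      using assms \<open>1 \<le> d\<close> \<open>0 < m\<close> \<open>m \<le> H\<close> \<open>0 \<le> J\<close> unfolding Jl_def \<delta>_def p_def
      by (intro mult_right_mono annulus_factor_le) auto
    finally show ?thesis by (simp add: I_def J_def p_def)
  qed
qed

theorem lemma4p2:
  fixes gam lam H :: real
  assumes "0 < gam" "gam < 1" "0 < lam" "lam < 1" "H > 1"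
  shows "\<exists>N::real. \<forall>(g :: 'a::euclidean_space \<Rightarrow> real) (a::real) (b::real) (R::real) (r::real).
      0 \<le> a \<and> a < b \<and>
      bounded (range g) \<and> continuous_on UNIV g \<and>
      (\<forall>x. 0 \<le> g x \<and> g x \<le> H) \<and>
      (\<forall>x y. \<bar>g x - g y\<bar> \<le> H * norm (x - y) powr gam) \<and>
      R > 1 \<and> 0 < r \<and>
      r < min (R / b)
        (1 / (b - a) * (2 powr (- (gam + 1) / gam) * H powr (- real DIM('a) / gam)
             * R powr (real DIM('a) - 1)
             * (real DIM('a) * pi powr (real DIM('a) / 2) / Gamma (real DIM('a) / 2 + 1)))
           powr (1 / (gam + real DIM('a) - 1)))
      \<longrightarrow>
      (LINT x:{x. R + a * r < norm x \<and> norm x < R + b * r}|lborel. g x)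
          powr ((gam * lam + real DIM('a)) / (gam + real DIM('a)))
      \<le> N * R powr (real DIM('a) * (real DIM('a) - 1) / (gam + real DIM('a)))
          * (r * (b - a)) powr (- (real DIM('a) * (gam + real DIM('a) - 1) / (gam + real DIM('a))))
          * (LINT x:{x. R + a * r < norm x \<and> norm x < R + b * r}|lborel. g x powr lam)"
proof (intro exI[of _ "annulus_const gam lam H (real DIM('a))"] allI impI, elim conjE, goal_cases)
  case (1 g a b R r)
  have shell: "{x::'a. R + a * r < norm x \<and> norm x < R + b * r}
      = annulus (R + a * r) (R + a * r + r * (b - a))"
    by (auto simp: annulus_def algebra_simps)
  have "r * (b - a) < (annulus_width_const gam H (real DIM('a)) * R powr (real DIM('a) - 1))
      powr (1 / (gam + real DIM('a) - 1))"
    using 1(2,9) by (simp add: annulus_width_const_def unit_ball_vol_def pos_less_divide_eq ac_simps)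
  moreover have "0 \<le> R + a * r" "0 < r * (b - a)" using 1(1,2,7,8) by simp_all
  ultimately show ?case
    unfolding shell using 1(4-7) assms
    by (intro annulus_integral_estimate) auto
qed

end
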